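(* Let $\mathbb{P}$ be any of the fifteen preferential conditional logics $\mathbb{PCL}$, $\mathbb{PN}$, $\mathbb{PT}$, $\mathbb{PW}$, $\mathbb{PC}$, $\mathbb{PU}$, $\mathbb{PNU}$, $\mathbb{PTU}$, $\mathbb{PWU}$, $\mathbb{PCU}$, $\mathbb{PA}$, $\mathbb{PNA}$, $\mathbb{PTA}$, $\mathbb{PWA}$, $\mathbb{PCA}$, with axiom system as described in the context, and let $\mathcal{P}$ be the corresponding class of neighbourhood models. For every formula $F$, if $F$ is derivable in the axiom system of $\mathbb{P}$, then $F$ is valid in every model of $\mathcal{P}$.
   Context: Formulas: $\mathcal{L} ::= p \mid \bot \mid A\wedge B \mid A\lor B \mid A\rightarrow B \mid A>B$ with $p$ propositional variables; $\neg A := A\to\bot$, $\top:=\neg\bot$. Axiom systems (over classical propositional logic with modus ponens): $\mathbb{PCL}$ = (RCEA) from $A\leftrightarrow B$ infer $(A>C)\leftrightarrow(B>C)$; (RCK) from $A\rightarrow B$ infer $(C>A)\rightarrow(C>B)$; (ID) $A>A$; (R-And) $(A>B)\wedge(A>C)\rightarrow(A>(B\wedge C))$; (CM) $(A>B)\wedge(A>C)\rightarrow((A\wedge B)>C)$; (OR) $(A>C)\wedge(B>C)\rightarrow((A\lor B)>C)$. Further axioms: (N) $\neg(\top>\bot)$; (T) $A\rightarrow\neg(A>\bot)$; (W) $(A>B)\rightarrow(A\rightarrow B)$; (C) $(A\wedge B)\rightarrow(A>B)$; (U$_1$) $(\neg A>\bot)\rightarrow(\neg(\neg A>\bot)>\bot)$;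 (U$_2$) $\neg(A>\bot)\rightarrow((A>\bot)>\bot)$; (A$_1$) $(A>B)\rightarrow(C>(A>B))$; (A$_2$) $\neg(A>B)\rightarrow(C>\neg(A>B))$. $\mathbb{PN}=\mathbb{PCL}+$(N), $\mathbb{PT}=\mathbb{PN}+$(T), $\mathbb{PW}=\mathbb{PT}+$(W), $\mathbb{PC}=\mathbb{PW}+$(C); $\mathbb{PU}=\mathbb{PCL}+$(U$_1$)+(U$_2$), and $\mathbb{PNU},\mathbb{PTU},\mathbb{PWU},\mathbb{PCU}$ add to $\mathbb{PU}$ respectively (N); (N),(T); (N),(T),(W); (N),(T),(W),(C); $\mathbb{PA}=\mathbb{PCL}+$(A$_1$)+(A$_2$), and $\mathbb{PNA},\dots,\mathbb{PCA}$ analogously. A neighbourhood model is $\langle W,N,\llbracket\cdot\rrbracket\rangle$ with $W\neq\emptyset$, $N:W\to\mathcal{P}(\mathcal{P}(W))$ such that every $\alpha\in N(x)$ is non-empty, and $\llbracket\cdot\rrbracket$ assigns to each atom a subset of $W$. Forcing: $x\Vdash p$ iff $x\in\llbracket p\rrbracket$, Boolean connectives classical, and $x\Vdash A>B$ iff for all $\alpha\in N(x)$, if some $y\in\alpha$ has $y\Vdash A$, then there is $\beta\in N(x)$ with $\beta\subseteq\alpha$, some $y\in\beta$ with $y\Vdash A$, and every $y\in\beta$ satisfies $y\Vdash A\to B$. A formula is valid in a model if forced at every world. Model conditions: normality: $N(x)\neq\emptyset$ for all $x$; total reflexivity: for all $x$ there is $\alpha\in N(x)$ with $x\in\alpha$;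 weak centering: $x\in\alpha$ for all $\alpha\in N(x)$; centering: weak centering and $\{x\}\in N(x)$ for all $x$; uniformity: if $\alpha\in N(x)$ and $y\in\alpha$ then $\bigcup N(x)=\bigcup N(y)$; absoluteness: if $\alpha\in N(x)$ and $y\in\alpha$ then $N(x)=N(y)$. The class corresponding to a logic is the class of neighbourhood models satisfying the conditions named by its letters (N normality, T total reflexivity, W weak centering, C centering, U uniformity, A absoluteness; $\mathbb{PCL}$: all neighbourhood models). *)

theory Defs
  imports Main
begin

datatype fm =
    Atom nat
  | Bot
  | And fm fm
  | Or fm fm
  | Imp fm fm
  | Cond fm fm

definition Neg :: "fm \<Rightarrow> fm" where "Neg A = Imp A Bot"
definition Top :: fm where "Top = Neg Bot"
definition Iff :: "fm \<Rightarrow> fm \<Rightarrow> fm" where "Iff A B = And (Imp A B) (Imp B A)"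

fun beval :: "(fm \<Rightarrow> bool) \<Rightarrow> fm \<Rightarrow> bool" where
  "beval v (Atom p) = v (Atom p)"
| "beval v Bot = False"
| "beval v (And A B) = (beval v A \<and> beval v B)"
| "beval v (Or A B) = (beval v A \<or> beval v B)"
| "beval v (Imp A B) = (beval v A \<longrightarrow> beval v B)"
| "beval v (Cond A B) = v (Cond A B)"

definition taut :: "fm \<Rightarrow> bool" where
  "taut F \<longleftrightarrow> (\<forall>v. beval v F)"

datatype logic =
    PCL | PN | PT | PW | PC
  | PU | PNU | PTU | PWU | PCU
  | PA | PNA | PTA | PWA | PCA

definition hasN :: "logic \<Rightarrow> bool" where
  "hasN L \<longleftrightarrow> L \<in> {PN, PT, PW, PC, PNU, PTU, PWU, PCU, PNA, PTA, PWA, PCA}"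
definition hasT :: "logic \<Rightarrow> bool" where
  "hasT L \<longleftrightarrow> L \<in> {PT, PW, PC, PTU, PWU, PCU, PTA, PWA, PCA}"
definition hasW :: "logic \<Rightarrow> bool" where
  "hasW L \<longleftrightarrow> L \<in> {PW, PC, PWU, PCU, PWA, PCA}"
definition hasC :: "logic \<Rightarrow> bool" where
  "hasC L \<longleftrightarrow> L \<in> {PC, PCU, PCA}"
definition hasU :: "logic \<Rightarrow> bool" where
  "hasU L \<longleftrightarrow> L \<in> {PU, PNU, PTU, PWU, PCU}"
definition hasA :: "logic \<Rightarrow> bool" where
  "hasA L \<longleftrightarrow> L \<in> {PA, PNA, PTA, PWA, PCA}"

inductive deriv :: "logic \<Rightarrow> fm \<Rightarrow> bool" for L :: logic where
  Taut: "taut F \<Longrightarrow> deriv L F"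
| MP: "deriv L (Imp A B) \<Longrightarrow> deriv L A \<Longrightarrow> deriv L B"
| RCEA: "deriv L (Iff A B) \<Longrightarrow> deriv L (Iff (Cond A C) (Cond B C))"
| RCK: "deriv L (Imp A B) \<Longrightarrow> deriv L (Imp (Cond C A) (Cond C B))"
| ID: "deriv L (Cond A A)"
| RAnd: "deriv L (Imp (And (Cond A B) (Cond A C)) (Cond A (And B C)))"
| CM: "deriv L (Imp (And (Cond A B) (Cond A C)) (Cond (And A B) C))"
| OR: "deriv L (Imp (And (Cond A C) (Cond B C)) (Cond (Or A B) C))"
| AxN: "hasN L \<Longrightarrow> deriv L (Neg (Cond Top Bot))"
| AxT: "hasT L \<Longrightarrow> deriv L (Imp A (Neg (Cond A Bot)))"
| AxW: "hasW L \<Longrightarrow> deriv L (Imp (Cond A B) (Imp A B))"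
| AxC: "hasC L \<Longrightarrow> deriv L (Imp (And A B) (Cond A B))"
| AxU1: "hasU L \<Longrightarrow> deriv L (Imp (Cond (Neg A) Bot) (Cond (Neg (Cond (Neg A) Bot)) Bot))"
| AxU2: "hasU L \<Longrightarrow> deriv L (Imp (Neg (Cond A Bot)) (Cond (Cond A Bot) Bot))"
| AxA1: "hasA L \<Longrightarrow> deriv L (Imp (Cond A B) (Cond C (Cond A B)))"
| AxA2: "hasA L \<Longrightarrow> deriv L (Imp (Neg (Cond A B)) (Cond C (Neg (Cond A B))))"

text \<open>The set of worlds W is the (nonempty) type 'w; N is the neighbourhood function,
  V the valuation of atoms.\<close>

definition nbhd_model :: "('w \<Rightarrow> 'w set set) \<Rightarrow> bool" where
  "nbhd_model N \<longleftrightarrow> (\<forall>x. \<forall>\<alpha>\<in>N x. \<alpha> \<noteq> {})"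

fun forces :: "('w \<Rightarrow> 'w set set) \<Rightarrow> (nat \<Rightarrow> 'w set) \<Rightarrow> 'w \<Rightarrow> fm \<Rightarrow> bool" where
  "forces N V x (Atom p) = (x \<in> V p)"
| "forces N V x Bot = False"
| "forces N V x (And A B) = (forces N V x A \<and> forces N V x B)"
| "forces N V x (Or A B) = (forces N V x A \<or> forces N V x B)"
| "forces N V x (Imp A B) = (forces N V x A \<longrightarrow> forces N V x B)"
| "forces N V x (Cond A B) =
     (\<forall>\<alpha>\<in>N x. (\<exists>y\<in>\<alpha>. forces N V y A) \<longrightarrow>
        (\<exists>\<beta>\<in>N x. \<beta> \<subseteq> \<alpha> \<and> (\<exists>y\<in>\<beta>. forces N V y A) \<and>
                   (\<forall>y\<in>\<beta>. forces N V y A \<longrightarrow> forces N V y B)))"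

definition valid_in :: "('w \<Rightarrow> 'w set set) \<Rightarrow> (nat \<Rightarrow> 'w set) \<Rightarrow> fm \<Rightarrow> bool" where
  "valid_in N V F \<longleftrightarrow> (\<forall>x. forces N V x F)"

definition normal :: "('w \<Rightarrow> 'w set set) \<Rightarrow> bool" where
  "normal N \<longleftrightarrow> (\<forall>x. N x \<noteq> {})"
definition total_refl :: "('w \<Rightarrow> 'w set set) \<Rightarrow> bool" where
  "total_refl N \<longleftrightarrow> (\<forall>x. \<exists>\<alpha>\<in>N x. x \<in> \<alpha>)"
definition weak_center :: "('w \<Rightarrow> 'w set set) \<Rightarrow> bool" where
  "weak_center N \<longleftrightarrow> (\<forall>x. \<forall>\<alpha>\<in>N x. x \<in> \<alpha>)"
definition center :: "('w \<Rightarrow> 'w set set) \<Rightarrow> bool" where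
  "center N \<longleftrightarrow> weak_center N \<and> (\<forall>x. {x} \<in> N x)"
definition uniform :: "('w \<Rightarrow> 'w set set) \<Rightarrow> bool" where
  "uniform N \<longleftrightarrow> (\<forall>x. \<forall>\<alpha>\<in>N x. \<forall>y\<in>\<alpha>. \<Union>(N x) = \<Union>(N y))"
definition absolute :: "('w \<Rightarrow> 'w set set) \<Rightarrow> bool" where
  "absolute N \<longleftrightarrow> (\<forall>x. \<forall>\<alpha>\<in>N x. \<forall>y\<in>\<alpha>. N x = N y)"

definition in_class :: "logic \<Rightarrow> ('w \<Rightarrow> 'w set set) \<Rightarrow> bool" where
  "in_class L N \<longleftrightarrow> nbhd_model N
     \<and> (hasN L \<longrightarrow> normal N) \<and> (hasT L \<longrightarrow> total_refl N)
     \<and> (hasW L \<longrightarrow> weak_center N) \<and> (hasC L \<longrightarrow> center N)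
     \<and> (hasU L \<longrightarrow> uniform N) \<and> (hasA L \<longrightarrow> absolute N)"

end

theory Submission
  imports Defs
begin

text \<open>The truth condition of \<open>A > B\<close> at \<open>x\<close> depends only on the neighbourhood system \<open>N x\<close>
  and on the truth sets of \<open>A\<close> and \<open>B\<close>. Abstracting these (\<open>nbhd_cond\<close>), the rules of PCL
  become facts about an arbitrary family of sets, each obtained by refining a neighbourhood
  once or twice. Each further axiom is matched by its frame condition; for (U) and (A) the
  point is that \<open>A > \<bottom>\<close> depends only on \<open>\<Union>(N x)\<close> and every conditional only on \<open>N x\<close>,
  and uniformity resp. absoluteness keep these constant on the neighbourhoods of \<open>x\<close>.\<close>

definition nbhd_cond :: "'w set set \<Rightarrow> ('w \<Rightarrow> bool) \<Rightarrow> ('w \<Rightarrow> bool) \<Rightarrow> bool" where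
  "nbhd_cond S P Q \<longleftrightarrow> (\<forall>\<alpha>\<in>S. (\<exists>y\<in>\<alpha>. P y) \<longrightarrow>
     (\<exists>\<beta>\<in>S. \<beta> \<subseteq> \<alpha> \<and> (\<exists>y\<in>\<beta>. P y) \<and> (\<forall>y\<in>\<beta>. P y \<longrightarrow> Q y)))"

lemma forces_Cond [simp]:
  "forces N V x (Cond A B) \<longleftrightarrow> nbhd_cond (N x) (\<lambda>y. forces N V y A) (\<lambda>y. forces N V y B)"
  by (simp add: nbhd_cond_def)

declare forces.simps(6) [simp del]

lemma nbhd_condI:
  assumes "\<And>\<alpha>. \<alpha> \<in> S \<Longrightarrow> \<exists>y\<in>\<alpha>. P y \<Longrightarrow>
             \<exists>\<beta>\<in>S. \<beta> \<subseteq> \<alpha> \<and> (\<exists>y\<in>\<beta>. P y) \<and> (\<forall>y\<in>\<beta>. P y \<longrightarrow> Q y)"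
  shows "nbhd_cond S P Q"
  using assms unfolding nbhd_cond_def by blast

lemma nbhd_condE:
  assumes "nbhd_cond S P Q" "\<alpha> \<in> S" "\<exists>y\<in>\<alpha>. P y"
  obtains \<beta> where "\<beta> \<in> S" "\<beta> \<subseteq> \<alpha>" "\<exists>y\<in>\<beta>. P y" "\<forall>y\<in>\<beta>. P y \<longrightarrow> Q y"
  using assms unfolding nbhd_cond_def by blast

lemma nbhd_cond_refl: "nbhd_cond S P P"
  by (rule nbhd_condI) blast

lemma nbhd_cond_mono:
  assumes RP: "nbhd_cond S R P" and PQ: "\<And>y. P y \<Longrightarrow> Q y"
  shows "nbhd_cond S R Q"
proof (rule nbhd_condI)
  fix \<alpha> assume "\<alpha> \<in> S" "\<exists>y\<in>\<alpha>. R y"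
  with RP obtain \<beta> where "\<beta> \<in> S" "\<beta> \<subseteq> \<alpha>" "\<exists>y\<in>\<beta>. R y" "\<forall>y\<in>\<beta>. R y \<longrightarrow> P y"
    by (rule nbhd_condE)
  with PQ show "\<exists>\<beta>\<in>S. \<beta> \<subseteq> \<alpha> \<and> (\<exists>y\<in>\<beta>. R y) \<and> (\<forall>y\<in>\<beta>. R y \<longrightarrow> Q y)"
    by blast
qed

lemma nbhd_cond_conj:
  assumes PQ: "nbhd_cond S P Q" and PR: "nbhd_cond S P R"
  shows "nbhd_cond S P (\<lambda>y. Q y \<and> R y)"
proof (rule nbhd_condI)
  fix \<alpha> assume "\<alpha> \<in> S" "\<exists>y\<in>\<alpha>. P y"
  with PQ obtain \<beta> where \<beta>: "\<beta> \<in> S" "\<beta> \<subseteq> \<alpha>" "\<exists>y\<in>\<beta>. P y" "\<forall>y\<in>\<beta>. P y \<longrightarrow> Q y"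
    by (rule nbhd_condE)
  from PR \<beta>(1,3) obtain \<gamma> where \<gamma>: "\<gamma> \<in> S" "\<gamma> \<subseteq> \<beta>" "\<exists>y\<in>\<gamma>. P y" "\<forall>y\<in>\<gamma>. P y \<longrightarrow> R y"
    by (rule nbhd_condE)
  have "\<gamma> \<subseteq> \<alpha>" using \<gamma>(2) \<beta>(2) by (rule order_trans)
  moreover have "\<forall>y\<in>\<gamma>. P y \<longrightarrow> Q y \<and> R y" using \<beta>(4) \<gamma>(2,4) by blast
  ultimately show "\<exists>\<gamma>\<in>S. \<gamma> \<subseteq> \<alpha> \<and> (\<exists>y\<in>\<gamma>. P y) \<and> (\<forall>y\<in>\<gamma>. P y \<longrightarrow> Q y \<and> R y)"
    using \<gamma>(1,3) by blast
qed

lemma nbhd_cond_cautious_mono: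
  assumes PQ: "nbhd_cond S P Q" and PR: "nbhd_cond S P R"
  shows "nbhd_cond S (\<lambda>y. P y \<and> Q y) R"
proof (rule nbhd_condI)
  fix \<alpha> assume "\<alpha> \<in> S" "\<exists>y\<in>\<alpha>. P y \<and> Q y"
  then have "\<exists>y\<in>\<alpha>. P y" by blast
  with PQ \<open>\<alpha> \<in> S\<close> obtain \<beta> where \<beta>: "\<beta> \<in> S" "\<beta> \<subseteq> \<alpha>" "\<exists>y\<in>\<beta>. P y" "\<forall>y\<in>\<beta>. P y \<longrightarrow> Q y"
    by (rule nbhd_condE)
  from PR \<beta>(1,3) obtain \<gamma> where \<gamma>: "\<gamma> \<in> S" "\<gamma> \<subseteq> \<beta>" "\<exists>y\<in>\<gamma>. P y" "\<forall>y\<in>\<gamma>. P y \<longrightarrow> R y"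
    by (rule nbhd_condE)
  have "\<gamma> \<subseteq> \<alpha>" using \<gamma>(2) \<beta>(2) by (rule order_trans)
  moreover have "\<exists>y\<in>\<gamma>. P y \<and> Q y" using \<beta>(4) \<gamma>(2,3) by blast
  ultimately show "\<exists>\<gamma>\<in>S. \<gamma> \<subseteq> \<alpha> \<and> (\<exists>y\<in>\<gamma>. P y \<and> Q y) \<and> (\<forall>y\<in>\<gamma>. P y \<and> Q y \<longrightarrow> R y)"
    using \<gamma>(1,4) by blast
qed

lemma nbhd_cond_disj:
  assumes PR: "nbhd_cond S P R" and QR: "nbhd_cond S Q R"
  shows "nbhd_cond S (\<lambda>y. P y \<or> Q y) R"
proof (rule nbhd_condI)
  fix \<alpha> assume \<alpha>: "\<alpha> \<in> S" "\<exists>y\<in>\<alpha>. P y \<or> Q y"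
  show "\<exists>\<gamma>\<in>S. \<gamma> \<subseteq> \<alpha> \<and> (\<exists>y\<in>\<gamma>. P y \<or> Q y) \<and> (\<forall>y\<in>\<gamma>. P y \<or> Q y \<longrightarrow> R y)"
  proof (cases "\<exists>y\<in>\<alpha>. P y")
    case True
    with PR \<alpha>(1) obtain \<beta> where \<beta>: "\<beta> \<in> S" "\<beta> \<subseteq> \<alpha>" "\<exists>y\<in>\<beta>. P y" "\<forall>y\<in>\<beta>. P y \<longrightarrow> R y"
      by (rule nbhd_condE)
    show ?thesis
    proof (cases "\<exists>y\<in>\<beta>. Q y")
      case True
      with QR \<beta>(1) obtain \<gamma> where \<gamma>: "\<gamma> \<in> S" "\<gamma> \<subseteq> \<beta>" "\<exists>y\<in>\<gamma>. Q y" "\<forall>y\<in>\<gamma>. Q y \<longrightarrow> R y"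
        by (rule nbhd_condE)
      have "\<gamma> \<subseteq> \<alpha>" using \<gamma>(2) \<beta>(2) by (rule order_trans)
      moreover have "\<forall>y\<in>\<gamma>. P y \<or> Q y \<longrightarrow> R y" using \<beta>(4) \<gamma>(2,4) by blast
      ultimately show ?thesis using \<gamma>(1,3) by blast
    next
      case False
      with \<beta> show ?thesis by blast
    qed
  next
    case False
    with \<alpha>(2) have "\<exists>y\<in>\<alpha>. Q y" by blast
    with QR \<alpha>(1) obtain \<beta> where \<beta>: "\<beta> \<in> S" "\<beta> \<subseteq> \<alpha>" "\<exists>y\<in>\<beta>. Q y" "\<forall>y\<in>\<beta>. Q y \<longrightarrow> R y"
      by (rule nbhd_condE)
    have "\<forall>y\<in>\<beta>. P y \<or> Q y \<longrightarrow> R y" using False \<beta>(2,4) by blast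
    then show ?thesis using \<beta>(1-3) by blast
  qed
qed

lemma nbhd_cond_False_iff: "nbhd_cond S P (\<lambda>_. False) \<longleftrightarrow> (\<forall>y\<in>\<Union>S. \<not> P y)"
  unfolding nbhd_cond_def by fastforce

lemma nbhd_cond_weak_center:
  assumes "nbhd_cond S P Q" "x \<in> \<Union>S" "\<forall>\<alpha>\<in>S. x \<in> \<alpha>" "P x"
  shows "Q x"
proof -
  from assms(2) obtain \<alpha> where \<alpha>: "\<alpha> \<in> S" "x \<in> \<alpha>" by blast
  with assms(4) have "\<exists>y\<in>\<alpha>. P y" by blast
  with assms(1) \<alpha>(1) obtain \<beta> where "\<beta> \<in> S" "\<forall>y\<in>\<beta>. P y \<longrightarrow> Q y"
    by (rule nbhd_condE)
  with assms(3,4) show "Q x" by blast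
qed

lemma nbhd_cond_center:
  assumes "{x} \<in> S" "\<forall>\<alpha>\<in>S. x \<in> \<alpha>" "P x" "Q x"
  shows "nbhd_cond S P Q"
proof (rule nbhd_condI)
  fix \<alpha> assume "\<alpha> \<in> S"
  with assms show "\<exists>\<beta>\<in>S. \<beta> \<subseteq> \<alpha> \<and> (\<exists>y\<in>\<beta>. P y) \<and> (\<forall>y\<in>\<beta>. P y \<longrightarrow> Q y)"
    by (intro bexI[of _ "{x}"]) auto
qed

lemma nbhd_cond_absolute:
  assumes "absolute N" "\<Phi> (N x)"
  shows "nbhd_cond (N x) P (\<lambda>y. \<Phi> (N y))"
proof (rule nbhd_condI)
  fix \<alpha> assume "\<alpha> \<in> N x" "\<exists>y\<in>\<alpha>. P y"
  moreover from \<open>\<alpha> \<in> N x\<close> have "\<forall>y\<in>\<alpha>. \<Phi> (N y)"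
    using assms unfolding absolute_def by metis
  ultimately show "\<exists>\<beta>\<in>N x. \<beta> \<subseteq> \<alpha> \<and> (\<exists>y\<in>\<beta>. P y) \<and> (\<forall>y\<in>\<beta>. P y \<longrightarrow> \<Phi> (N y))"
    by blast
qed

lemma uniform_Union_eq:
  assumes "uniform N" "y \<in> \<Union>(N x)"
  shows "\<Union>(N y) = \<Union>(N x)"
  using assms unfolding uniform_def by blast

lemma beval_forces: "beval (forces N V x) F = forces N V x F"
  by (induction F) auto

lemma valid_in_Taut: "taut F \<Longrightarrow> valid_in N V F"
  unfolding taut_def valid_in_def by (metis beval_forces)

lemma valid_in_MP: "valid_in N V (Imp A B) \<Longrightarrow> valid_in N V A \<Longrightarrow> valid_in N V B"
  unfolding valid_in_def by simp

lemma valid_in_RCEA: "valid_in N V (Iff A B) \<Longrightarrow> valid_in N V (Iff (Cond A C) (Cond B C))"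
proof -
  assume "valid_in N V (Iff A B)"
  then have "(\<lambda>y. forces N V y A) = (\<lambda>y. forces N V y B)"
    unfolding valid_in_def Iff_def by auto
  then show ?thesis
    unfolding valid_in_def Iff_def by simp
qed

lemma valid_in_RCK: "valid_in N V (Imp A B) \<Longrightarrow> valid_in N V (Imp (Cond C A) (Cond C B))"
  unfolding valid_in_def by (auto elim: nbhd_cond_mono)

lemma valid_in_ID: "valid_in N V (Cond A A)"
  unfolding valid_in_def by (simp add: nbhd_cond_refl)

lemma valid_in_RAnd: "valid_in N V (Imp (And (Cond A B) (Cond A C)) (Cond A (And B C)))"
  unfolding valid_in_def by (simp add: nbhd_cond_conj)

lemma valid_in_CM: "valid_in N V (Imp (And (Cond A B) (Cond A C)) (Cond (And A B) C))"
  unfolding valid_in_def by (simp add: nbhd_cond_cautious_mono)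

lemma valid_in_OR: "valid_in N V (Imp (And (Cond A C) (Cond B C)) (Cond (Or A B) C))"
  unfolding valid_in_def by (simp add: nbhd_cond_disj)

lemma valid_in_N:
  assumes "nbhd_model N" "normal N"
  shows "valid_in N V (Neg (Cond Top Bot))"
proof -
  have "\<exists>y. \<exists>\<alpha>\<in>N x. y \<in> \<alpha>" for x
    using assms unfolding nbhd_model_def normal_def by (metis all_not_in_conv)
  then show ?thesis
    unfolding valid_in_def Neg_def Top_def by (simp add: nbhd_cond_False_iff)
qed

lemma valid_in_T:
  assumes "total_refl N"
  shows "valid_in N V (Imp A (Neg (Cond A Bot)))"
  using assms unfolding valid_in_def Neg_def total_refl_def
  by (simp add: nbhd_cond_False_iff) blast

lemma valid_in_W:
  assumes "total_refl N" "weak_center N"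
  shows "valid_in N V (Imp (Cond A B) (Imp A B))"
  using assms unfolding valid_in_def total_refl_def weak_center_def
  by (auto intro: nbhd_cond_weak_center)

lemma valid_in_C:
  assumes "center N"
  shows "valid_in N V (Imp (And A B) (Cond A B))"
  using assms unfolding valid_in_def center_def weak_center_def
  by (auto intro!: nbhd_cond_center)

lemma valid_in_U1:
  assumes "uniform N"
  shows "valid_in N V (Imp (Cond (Neg A) Bot) (Cond (Neg (Cond (Neg A) Bot)) Bot))"
  unfolding valid_in_def Neg_def
  by (simp only: forces.simps(2,5) forces_Cond nbhd_cond_False_iff) (metis uniform_Union_eq[OF assms])

lemma valid_in_U2:
  assumes "uniform N"
  shows "valid_in N V (Imp (Neg (Cond A Bot)) (Cond (Cond A Bot) Bot))"
  unfolding valid_in_def Neg_def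
  by (simp only: forces.simps(2,5) forces_Cond nbhd_cond_False_iff) (metis uniform_Union_eq[OF assms])

lemma valid_in_A1:
  assumes "absolute N"
  shows "valid_in N V (Imp (Cond A B) (Cond C (Cond A B)))"
  unfolding valid_in_def
  by (simp add: nbhd_cond_absolute[OF assms, where \<Phi> = "\<lambda>M. nbhd_cond M _ _"])

lemma valid_in_A2:
  assumes "absolute N"
  shows "valid_in N V (Imp (Neg (Cond A B)) (Cond C (Neg (Cond A B))))"
  unfolding valid_in_def Neg_def
  by (simp add: nbhd_cond_absolute[OF assms, where \<Phi> = "\<lambda>M. \<not> nbhd_cond M _ _"])

theorem mainTheorem1:
  fixes L :: logic and F :: fm
    and N :: "'w \<Rightarrow> 'w set set" and V :: "nat \<Rightarrow> 'w set"
  assumes "deriv L F"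
    and "in_class L N"
  shows "valid_in N V F"
  using assms
proof (induction rule: deriv.induct)
  case (AxW A B)
  \<comment> \<open>weak centering alone allows \<open>N x = {}\<close>; (W) only occurs together with (T)\<close>
  then show ?case by (intro valid_in_W) (auto simp: in_class_def hasW_def hasT_def)
qed (auto simp: in_class_def intro: valid_in_Taut valid_in_MP valid_in_RCEA valid_in_RCK
  valid_in_ID valid_in_RAnd valid_in_CM valid_in_OR valid_in_N valid_in_T valid_in_C
  valid_in_U1 valid_in_U2 valid_in_A1 valid_in_A2)

end
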